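(* Let $n\ge 2$ and let $\|\cdot\|$ be a norm on $\mathbb{R}^{n+1}$ which is $C^2$ smooth on $\mathbb{R}^{n+1}\setminus\{0\}$. Suppose there exists $\varepsilon>0$ such that $$\langle \nabla^2_{\mathbb{R}^{n+1}}\|\cdot\|(y)\,\theta,\theta\rangle \geq \varepsilon\,\|y\| \quad\text{for all } y,\theta\in S^n \text{ with } \langle y,\theta\rangle = 0.$$ Then for every $\alpha\ge -n$, the weighted manifold $(S^n,g,\eta^{n,\alpha})$ satisfies $CD\big(n-1-(1-\varepsilon)(n+\alpha), -\alpha\big)$, where $d\eta^{n,\alpha}(y) = \frac{c_{n,\alpha}}{\|y\|^{n+\alpha}}\,d\sigma^n(y)$ and $c_{n,\alpha}>0$ is a normalizing constant.
   Context: $S^n\subset\mathbb{R}^{n+1}$ is the Euclidean unit sphere with canonical Riemannian metric $g$; $\sigma^n$ is the Haar probability measure on $S^n$; $\langle\cdot,\cdot\rangle$ is the Euclidean inner product and $\nabla^2_{\mathbb{R}^{n+1}}$ the Euclidean Hessian. Curvature-Dimension condition (tensorial definition): for a closed Riemannian manifold $(M^n,g)$ with a measure $\mu$ having positive $C^2$ density $\Psi$ with respect to the Riemannian volume, and $N\in(-\infty,\infty]$, set $\mathrm{Ric}_{g,\mu,N} := \mathrm{Ric}_g - \nabla_g^2\log\Psi - \frac{1}{N-n}\nabla_g\log\Psi\otimes\nabla_g\log\Psi$ (conventions $1/\infty=0$, $1/0=+\infty$, $\infty\cdot 0=0$). $(M,g,\mu)$ satisfies $CD(\rho,N)$ if $\mathrm{Ric}_{g,\mu,N}\ge\rho\,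 g$ as symmetric 2-tensors on $M$. *)

theory Defs
  imports "HOL-Analysis.Analysis"
begin

text \<open>The unit sphere S^n is modelled as sphere 0 1 inside real^'n, with CARD('n) = n+1.
  Tangent vectors at y are the theta with y \<bullet> theta = 0.\<close>

text \<open>Geodesic of the round sphere through y with initial velocity theta (y unit, theta tangent).\<close>
definition sph_geod :: "'a::real_normed_vector \<Rightarrow> 'a \<Rightarrow> real \<Rightarrow> 'a" where
  "sph_geod y \<theta> t = cos (t * norm \<theta>) *\<^sub>R y + (sin (t * norm \<theta>) / norm \<theta>) *\<^sub>R \<theta>"

text \<open>Riemannian differential of f at y applied to theta: (d f)_y(theta) = <grad_g f(y), theta>.\<close>
definition sph_d1 :: "('a::real_normed_vector \<Rightarrow> real) \<Rightarrow> 'a \<Rightarrow> 'a \<Rightarrow> real" where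
  "sph_d1 f y \<theta> = deriv (\<lambda>t. f (sph_geod y \<theta> t)) 0"

text \<open>Riemannian Hessian quadratic form: (nabla_g^2 f)_y(theta,theta) = (f o gamma)''(0)
  for the geodesic gamma with gamma(0)=y, gamma'(0)=theta.\<close>
definition sph_hess :: "('a::real_normed_vector \<Rightarrow> real) \<Rightarrow> 'a \<Rightarrow> 'a \<Rightarrow> real" where
  "sph_hess f y \<theta> = deriv (deriv (\<lambda>t. f (sph_geod y \<theta> t))) 0"

text \<open>Curvature-dimension condition CD(rho, N) (finite N) for (S^n, g, mu), where mu has density
  Psi with respect to the Riemannian volume. Ric_g = (n-1) g on the round unit sphere S^n.
  Convention 1/0 = +infinity, infinity * 0 = 0: when N = n the tensor is +infinity * (dlogPsi)^2,
  so the condition forces dlogPsi = 0 (and then that term is 0).\<close>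
definition CD_sphere :: "nat \<Rightarrow> ('a::real_inner \<Rightarrow> real) \<Rightarrow> real \<Rightarrow> real \<Rightarrow> bool" where
  "CD_sphere n \<Psi> \<rho> N \<longleftrightarrow>
     (\<forall>y \<in> sphere 0 1. \<forall>\<theta>. y \<bullet> \<theta> = 0 \<longrightarrow>
        (let V = (\<lambda>x. ln (\<Psi> x)); dV = sph_d1 V y \<theta> in
          (N = real n \<longrightarrow> dV = 0) \<and>
          (real n - 1) * (\<theta> \<bullet> \<theta>) - sph_hess V y \<theta>
             - (if N = real n then 0 else dV ^ 2 / (N - real n))
           \<ge> \<rho> * (\<theta> \<bullet> \<theta>)))"

end

theory Submission
  imports Defs
begin

text \<open>Put \<beta> = n + \<alpha>, so that the log-density is V = ln c - \<beta> ln \<phi> with \<phi> the norm, and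
  N - n = -\<beta>. Along the great circle \<gamma> with \<gamma>(0) = y, \<gamma>'(0) = \<theta>, write f = \<phi> \<circ> \<gamma>. Then
  V' = -\<beta> f'/f and V'' = -\<beta> (f f'' - f'^2)/f^2, so in -V'' - V'^2/(N - n) the f'^2 terms
  cancel and leave \<beta> f''(0)/f(0). Since \<gamma>''(0) = -|\<theta>|^2 y, Euler's identity
  \<langle>\<nabla>\<phi>(y), y\<rangle> = \<phi>(y) gives f''(0) = \<langle>\<nabla>^2\<phi>(y) \<theta>, \<theta>\<rangle> - |\<theta>|^2 \<phi>(y), which the convexity
  hypothesis bounds below by -(1 - \<epsilon>) |\<theta>|^2 \<phi>(y).\<close>

lemma has_real_derivative_inner_comp:
  fixes F :: "'a::real_inner \<Rightarrow> real"
  assumes "(F has_derivative (\<lambda>h. g \<bullet> h)) (at (\<gamma> t))"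
    and "(\<gamma> has_vector_derivative v) (at t)"
  shows "((\<lambda>s. F (\<gamma> s)) has_real_derivative g \<bullet> v) (at t)"
  using vector_derivative_diff_chain_within[of \<gamma> v t UNIV F "\<lambda>h. g \<bullet> h"] assms
  by (simp add: has_derivative_at_withinI o_def has_real_derivative_iff_has_vector_derivative)

lemma euler_homogeneous_gradient:
  fixes F :: "'a::real_inner \<Rightarrow> real"
  assumes hom: "\<And>c. c > 0 \<Longrightarrow> F (c *\<^sub>R x) = c * F x"
    and grad: "(F has_derivative (\<lambda>h. g \<bullet> h)) (at x)"
  shows "g \<bullet> x = F x"
proof -
  have "((\<lambda>s. s *\<^sub>R x) has_vector_derivative x) (at 1)"
    by (rule derivative_eq_intros refl)+ simp
  then have "((\<lambda>s. F (s *\<^sub>R x)) has_real_derivative g \<bullet> x) (at 1)"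
    using grad by (intro has_real_derivative_inner_comp) simp_all
  moreover have "((\<lambda>s. F (s *\<^sub>R x)) has_real_derivative F x) (at 1)"
    by (rule has_field_derivative_transform_within_open[where S = "{0<..}"])
       (auto intro!: derivative_eq_intros simp: hom)
  ultimately show ?thesis by (rule DERIV_unique)
qed

lemma subadditive_abs_homogeneous_nonneg:
  fixes F :: "'a::real_vector \<Rightarrow> real"
  assumes hom: "\<And>c x. F (c *\<^sub>R x) = \<bar>c\<bar> * F x"
    and subadd: "\<And>x y. F (x + y) \<le> F x + F y"
  shows "F x \<ge> 0"
proof -
  have "F 0 \<le> F x + F (- x)" using subadd[of x "- x"] by simp
  moreover have "F (- x) = F x" using hom[of "-1" x] by simp
  moreover have "F 0 = 0" using hom[of 0 x] by simp
  ultimately show ?thesis by simp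
qed

lemma quadratic_form_lower_bound_tangent:
  fixes A :: "real ^ 'n ^ 'n" and y u :: "real ^ 'n"
  assumes unit: "\<And>\<theta>. \<theta> \<in> sphere 0 1 \<Longrightarrow> y \<bullet> \<theta> = 0 \<Longrightarrow> \<theta> \<bullet> (A *v \<theta>) \<ge> m"
    and "y \<bullet> u = 0"
  shows "u \<bullet> (A *v u) \<ge> m * (u \<bullet> u)"
proof (cases "u = 0")
  case False
  define v where "v = (1 / norm u) *\<^sub>R u"
  have "v \<bullet> (A *v v) \<ge> m"
    using False assms(2) by (intro unit) (simp_all add: v_def)
  then have "norm u ^ 2 * m \<le> norm u ^ 2 * (v \<bullet> (A *v v))"
    by (simp add: mult_left_mono)
  also have "\<dots> = u \<bullet> (A *v u)"
    using False by (simp add: v_def matrix_vector_mult_scaleR power2_eq_square)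
  finally show ?thesis by (simp add: dot_square_norm mult.commute)
qed simp

lemma sph_geod_has_vector_derivative:
  "(sph_geod y \<theta> has_vector_derivative
     (- (norm \<theta> * sin (t * norm \<theta>))) *\<^sub>R y + cos (t * norm \<theta>) *\<^sub>R \<theta>) (at t)"
proof (cases "\<theta> = 0")
  case True
  then have "sph_geod y \<theta> = (\<lambda>t. y)" by (simp add: sph_geod_def fun_eq_iff)
  then show ?thesis using True by simp
next
  case False
  have "sph_geod y \<theta> = (\<lambda>t. cos (t * norm \<theta>) *\<^sub>R y + (sin (t * norm \<theta>) / norm \<theta>) *\<^sub>R \<theta>)"
    by (simp add: sph_geod_def fun_eq_iff)
  then show ?thesis
    using False by (auto intro!: derivative_eq_intros simp: algebra_simps)
qed

lemma sph_geod_velocity_has_vector_derivative: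
  "((\<lambda>t. (- (r * sin (t * r))) *\<^sub>R y + cos (t * r) *\<^sub>R \<theta>) has_vector_derivative
     (- (r\<^sup>2 * cos (t * r))) *\<^sub>R y - (r * sin (t * r)) *\<^sub>R \<theta>) (at t)"
  by (auto intro!: derivative_eq_intros simp: algebra_simps power2_eq_square)

lemma sph_geod_in_sphere:
  fixes y \<theta> :: "'a::real_inner"
  assumes "y \<in> sphere 0 1" and "y \<bullet> \<theta> = 0"
  shows "sph_geod y \<theta> t \<in> sphere 0 1"
proof (cases "\<theta> = 0")
  case False
  have "y \<bullet> y = 1" and "\<theta> \<bullet> \<theta> = (norm \<theta>)\<^sup>2"
    using assms(1) by (simp_all add: dot_square_norm)
  then have "sph_geod y \<theta> t \<bullet> sph_geod y \<theta> t = (cos (t * norm \<theta>))\<^sup>2 + (sin (t * norm \<theta>))\<^sup>2"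
    using assms(2) False
    by (simp add: sph_geod_def inner_add_left inner_add_right inner_commute power2_eq_square field_simps)
  then show ?thesis by (simp add: norm_eq_1)
qed (use assms in \<open>simp add: sph_geod_def\<close>)

lemma has_real_derivative_inner_gradient_comp:
  fixes G :: "real ^ 'n \<Rightarrow> real ^ 'n" and \<gamma> w :: "real \<Rightarrow> real ^ 'n"
  assumes "(G has_derivative (\<lambda>h. A *v h)) (at (\<gamma> t))"
    and "(\<gamma> has_vector_derivative v) (at t)"
    and "(w has_vector_derivative a) (at t)"
  shows "((\<lambda>s. G (\<gamma> s) \<bullet> w s) has_real_derivative G (\<gamma> t) \<bullet> a + (A *v v) \<bullet> w t) (at t)"
proof -
  have "((\<lambda>s. G (\<gamma> s)) has_vector_derivative A *v v) (at t)"
    using vector_derivative_diff_chain_within[of \<gamma> v t UNIV G "\<lambda>h. A *v h"] assms(1,2)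
    by (simp add: has_derivative_at_withinI o_def)
  from bounded_bilinear.has_vector_derivative[OF bounded_bilinear_inner this assms(3)]
  show ?thesis by (simp add: has_real_derivative_iff_has_vector_derivative)
qed

lemma sph_derivatives_power_weight:
  fixes F :: "real ^ 'n \<Rightarrow> real" and G :: "real ^ 'n \<Rightarrow> real ^ 'n"
    and H :: "real ^ 'n \<Rightarrow> real ^ 'n ^ 'n"
  assumes pos: "\<And>x. x \<noteq> 0 \<Longrightarrow> F x > 0"
    and grad: "\<And>x. x \<noteq> 0 \<Longrightarrow> (F has_derivative (\<lambda>h. G x \<bullet> h)) (at x)"
    and hess: "\<And>x. x \<noteq> 0 \<Longrightarrow> (G has_derivative (\<lambda>h. H x *v h)) (at x)"
    and y: "y \<in> sphere 0 1" and y\<theta>: "y \<bullet> \<theta> = 0" and "c > 0"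
  shows "sph_d1 (\<lambda>x. ln (c / F x powr \<beta>)) y \<theta> = - \<beta> * (G y \<bullet> \<theta>) / F y"
    and "sph_hess (\<lambda>x. ln (c / F x powr \<beta>)) y \<theta>
           = - \<beta> * (((H y *v \<theta>) \<bullet> \<theta> - (\<theta> \<bullet> \<theta>) * (G y \<bullet> y)) * F y - (G y \<bullet> \<theta>)\<^sup>2) / (F y)\<^sup>2"
proof -
  define r where "r = norm \<theta>"
  define \<gamma> where "\<gamma> = sph_geod y \<theta>"
  define \<gamma>1 where "\<gamma>1 t = (- (r * sin (t * r))) *\<^sub>R y + cos (t * r) *\<^sub>R \<theta>" for t
  define \<gamma>2 where "\<gamma>2 t = (- (r\<^sup>2 * cos (t * r))) *\<^sub>R y - (r * sin (t * r)) *\<^sub>R \<theta>" for t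
  have \<gamma>_nz: "\<gamma> t \<noteq> 0" for t
    using sph_geod_in_sphere[OF y y\<theta>, of t] by (auto simp: \<gamma>_def)
  define \<phi> where "\<phi> t = F (\<gamma> t)" for t
  define \<phi>1 where "\<phi>1 t = G (\<gamma> t) \<bullet> \<gamma>1 t" for t
  define \<phi>2 where "\<phi>2 t = G (\<gamma> t) \<bullet> \<gamma>2 t + (H (\<gamma> t) *v \<gamma>1 t) \<bullet> \<gamma>1 t" for t
  have \<phi>_pos: "\<phi> t > 0" for t
    using pos[OF \<gamma>_nz] by (simp add: \<phi>_def)
  have d\<gamma>: "(\<gamma> has_vector_derivative \<gamma>1 t) (at t)" for t
    using sph_geod_has_vector_derivative by (simp add: \<gamma>_def \<gamma>1_def r_def)
  have d\<phi>: "(\<phi> has_real_derivative \<phi>1 t) (at t)" for t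
    unfolding \<phi>_def \<phi>1_def by (rule has_real_derivative_inner_comp[OF grad[OF \<gamma>_nz[of t]] d\<gamma>[of t]])
  have d\<phi>1: "(\<phi>1 has_real_derivative \<phi>2 t) (at t)" for t
    unfolding \<phi>1_def \<phi>2_def
    by (rule has_real_derivative_inner_gradient_comp[OF hess[OF \<gamma>_nz[of t]] d\<gamma>[of t]])
       (unfold \<gamma>1_def[abs_def] \<gamma>2_def, rule sph_geod_velocity_has_vector_derivative)
  have V_along_\<gamma>: "(\<lambda>t. ln (c / F (sph_geod y \<theta> t) powr \<beta>)) = (\<lambda>t. ln c - \<beta> * ln (\<phi> t))"
  proof
    fix t
    show "ln (c / F (sph_geod y \<theta> t) powr \<beta>) = ln c - \<beta> * ln (\<phi> t)"
      using \<phi>_pos[of t] \<open>c > 0\<close> by (simp add: \<phi>_def \<gamma>_def ln_div ln_powr)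
  qed
  define W1 where "W1 t = - \<beta> * \<phi>1 t / \<phi> t" for t
  have "((\<lambda>t. ln c - \<beta> * ln (\<phi> t)) has_real_derivative W1 t) (at t)" for t
    using \<phi>_pos[of t] by (auto intro!: derivative_eq_intros d\<phi> simp: W1_def field_simps)
  then have deriv_V: "deriv (\<lambda>t. ln c - \<beta> * ln (\<phi> t)) = W1"
    by (simp add: fun_eq_iff DERIV_imp_deriv)
  have "(W1 has_real_derivative - \<beta> * (\<phi>2 t * \<phi> t - (\<phi>1 t)\<^sup>2) / (\<phi> t)\<^sup>2) (at t)" for t
    unfolding W1_def using \<phi>_pos[of t]
    by (auto intro!: derivative_eq_intros d\<phi> d\<phi>1 simp: power2_eq_square field_simps)
  then have deriv_W1: "deriv W1 0 = - \<beta> * (\<phi>2 0 * \<phi> 0 - (\<phi>1 0)\<^sup>2) / (\<phi> 0)\<^sup>2"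
    by (rule DERIV_imp_deriv)
  have at0: "\<phi> 0 = F y" "\<phi>1 0 = G y \<bullet> \<theta>"
    "\<phi>2 0 = (H y *v \<theta>) \<bullet> \<theta> - (\<theta> \<bullet> \<theta>) * (G y \<bullet> y)"
    by (simp_all add: \<phi>_def \<phi>1_def \<phi>2_def \<gamma>_def \<gamma>1_def \<gamma>2_def r_def sph_geod_def dot_square_norm)
  show "sph_d1 (\<lambda>x. ln (c / F x powr \<beta>)) y \<theta> = - \<beta> * (G y \<bullet> \<theta>) / F y"
    unfolding sph_d1_def V_along_\<gamma> deriv_V by (simp add: W1_def at0)
  show "sph_hess (\<lambda>x. ln (c / F x powr \<beta>)) y \<theta>
           = - \<beta> * (((H y *v \<theta>) \<bullet> \<theta> - (\<theta> \<bullet> \<theta>) * (G y \<bullet> y)) * F y - (G y \<bullet> \<theta>)\<^sup>2) / (F y)\<^sup>2"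
    unfolding sph_hess_def V_along_\<gamma> deriv_V deriv_W1 by (simp add: at0 mult.commute)
qed

lemma CD_sphere_power_weight:
  fixes F :: "real ^ 'n \<Rightarrow> real" and G :: "real ^ 'n \<Rightarrow> real ^ 'n"
    and H :: "real ^ 'n \<Rightarrow> real ^ 'n ^ 'n"
  assumes pos: "\<And>x. x \<noteq> 0 \<Longrightarrow> F x > 0"
    and grad: "\<And>x. x \<noteq> 0 \<Longrightarrow> (F has_derivative (\<lambda>h. G x \<bullet> h)) (at x)"
    and hess: "\<And>x. x \<noteq> 0 \<Longrightarrow> (G has_derivative (\<lambda>h. H x *v h)) (at x)"
    and euler: "\<And>x. x \<noteq> 0 \<Longrightarrow> G x \<bullet> x = F x"
    and bound: "\<And>y \<theta>. y \<in> sphere 0 1 \<Longrightarrow> y \<bullet> \<theta> = 0 \<Longrightarrow>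
                  \<theta> \<bullet> (H y *v \<theta>) \<ge> \<epsilon> * (\<theta> \<bullet> \<theta>) * F y"
    and "\<beta> \<ge> 0" and "c > 0"
  shows "CD_sphere n (\<lambda>y. c / F y powr \<beta>) (real n - 1 - (1 - \<epsilon>) * \<beta>) (real n - \<beta>)"
  unfolding CD_sphere_def Let_def
proof (intro ballI allI impI)
  fix y \<theta> :: "real ^ 'n"
  assume y: "y \<in> sphere 0 1" and y\<theta>: "y \<bullet> \<theta> = 0"
  define P where "P = F y"
  define Q where "Q = (H y *v \<theta>) \<bullet> \<theta>"
  define D where "D = G y \<bullet> \<theta>"
  have "y \<noteq> 0" using y by auto
  then have "P > 0" and "G y \<bullet> y = P"
    using pos euler by (simp_all add: P_def)
  have "Q \<ge> \<epsilon> * (\<theta> \<bullet> \<theta>) * P"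
    using bound[OF y y\<theta>] by (simp add: P_def Q_def inner_commute)
  have d1: "sph_d1 (\<lambda>x. ln (c / F x powr \<beta>)) y \<theta> = - \<beta> * D / P"
    using sph_derivatives_power_weight(1)[OF pos grad hess y y\<theta> \<open>c > 0\<close>]
    by (simp add: P_def D_def)
  have d2: "sph_hess (\<lambda>x. ln (c / F x powr \<beta>)) y \<theta>
              = - \<beta> * ((Q - (\<theta> \<bullet> \<theta>) * P) * P - D\<^sup>2) / P\<^sup>2"
    using sph_derivatives_power_weight(2)[OF pos grad hess y y\<theta> \<open>c > 0\<close>] \<open>G y \<bullet> y = P\<close>
    by (simp add: P_def Q_def D_def)
  show "(real n - \<beta> = real n \<longrightarrow> sph_d1 (\<lambda>x. ln (c / F x powr \<beta>)) y \<theta> = 0) \<and>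
        (real n - 1 - (1 - \<epsilon>) * \<beta>) * (\<theta> \<bullet> \<theta>)
          \<le> (real n - 1) * (\<theta> \<bullet> \<theta>) - sph_hess (\<lambda>x. ln (c / F x powr \<beta>)) y \<theta>
             - (if real n - \<beta> = real n then 0
                else (sph_d1 (\<lambda>x. ln (c / F x powr \<beta>)) y \<theta>)\<^sup>2 / (real n - \<beta> - real n))"
  proof (cases "\<beta> = 0")
    case False
    then have "\<beta> > 0" using \<open>\<beta> \<ge> 0\<close> by simp
    \<comment> \<open>N - n = -\<beta> makes the (dV)^2 term cancel the D^2 part of the Hessian.\<close>
    have "- (- \<beta> * ((Q - (\<theta> \<bullet> \<theta>) * P) * P - D\<^sup>2) / P\<^sup>2) - (- \<beta> * D / P)\<^sup>2 / (- \<beta>)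
          = \<beta> * (Q - (\<theta> \<bullet> \<theta>) * P) / P"
      using \<open>\<beta> > 0\<close> \<open>P > 0\<close> by (simp add: field_simps power2_eq_square)
    also have "\<dots> \<ge> \<beta> * (- (1 - \<epsilon>) * (\<theta> \<bullet> \<theta>))"
      using \<open>Q \<ge> \<epsilon> * (\<theta> \<bullet> \<theta>) * P\<close> \<open>\<beta> > 0\<close> \<open>P > 0\<close>
      by (simp add: field_simps mult_left_mono)
    finally show ?thesis
      using False unfolding d1 d2 by (simp add: algebra_simps)
  qed (use d1 d2 in simp)
qed

theorem mainTheorem6:
  fixes n :: nat
    and Nrm :: "real ^ 'm \<Rightarrow> real"
    and G :: "real ^ 'm \<Rightarrow> real ^ 'm"
    and H :: "real ^ 'm \<Rightarrow> real ^ 'm ^ 'm"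
    and \<epsilon> :: real
  assumes dim: "CARD('m) = n + 1"
    and n2: "n \<ge> 2"
    and norm_zero: "\<And>x. Nrm x = 0 \<longleftrightarrow> x = 0"
    and norm_hom: "\<And>c x. Nrm (c *\<^sub>R x) = \<bar>c\<bar> * Nrm x"
    and norm_tri: "\<And>x y. Nrm (x + y) \<le> Nrm x + Nrm y"
    and grad: "\<And>x. x \<noteq> 0 \<Longrightarrow> (Nrm has_derivative (\<lambda>h. G x \<bullet> h)) (at x)"
    and hess: "\<And>x. x \<noteq> 0 \<Longrightarrow> (G has_derivative (\<lambda>h. H x *v h)) (at x)"
    and hess_cont: "continuous_on (UNIV - {0}) H"
    and eps_pos: "\<epsilon> > 0"
    and convex: "\<And>y \<theta>. y \<in> sphere 0 1 \<Longrightarrow> \<theta> \<in> sphere 0 1 \<Longrightarrow> y \<bullet> \<theta> = 0 \<Longrightarrow>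
                   \<theta> \<bullet> (H y *v \<theta>) \<ge> \<epsilon> * Nrm y"
  shows "\<forall>\<alpha>::real. \<alpha> \<ge> - real n \<longrightarrow> (\<forall>c::real. c > 0 \<longrightarrow>
           CD_sphere n (\<lambda>y. c / Nrm y powr (real n + \<alpha>))
             (real n - 1 - (1 - \<epsilon>) * (real n + \<alpha>)) (- \<alpha>))"
  \<comment> \<open>The condition is pointwise and Ric = (n - 1) g is built into CD_sphere.\<close>
proof (intro allI impI)
  fix \<alpha> c :: real
  assume "\<alpha> \<ge> - real n" and "c > 0"
  have pos: "Nrm x > 0" if "x \<noteq> 0" for x
    using subadditive_abs_homogeneous_nonneg[OF norm_hom norm_tri, of x] norm_zero[of x] that
    by linarith
  have euler: "G x \<bullet> x = Nrm x" if "x \<noteq> 0" for x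
    using euler_homogeneous_gradient[OF _ grad[OF that]] norm_hom by simp
  have bound: "\<theta> \<bullet> (H y *v \<theta>) \<ge> \<epsilon> * (\<theta> \<bullet> \<theta>) * Nrm y"
    if "y \<in> sphere 0 1" and "y \<bullet> \<theta> = 0" for y \<theta>
    using quadratic_form_lower_bound_tangent[OF convex[OF that(1)] that(2)]
    by (simp add: mult_ac)
  have "CD_sphere n (\<lambda>y. c / Nrm y powr (real n + \<alpha>))
          (real n - 1 - (1 - \<epsilon>) * (real n + \<alpha>)) (real n - (real n + \<alpha>))"
    using \<open>\<alpha> \<ge> - real n\<close> \<open>c > 0\<close>
    by (intro CD_sphere_power_weight[OF pos grad hess euler bound]) simp_all
  then show "CD_sphere n (\<lambda>y. c / Nrm y powr (real n + \<alpha>))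
               (real n - 1 - (1 - \<epsilon>) * (real n + \<alpha>)) (- \<alpha>)"
    by simp
qed

end
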